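(* Let $S$ be a complete metric space with distance $d$, and let $\preceq$ be a topological orientation on $S$. Assume that every left-bounded pair in $S$ has a meet, and that $h:S\to\mathbb{R}$ is continuous and a discriminator. Then $(S,\preceq)$ is a cc sponge.
   Context: An orientation on $S$ is a reflexive, antisymmetric binary relation $\preceq$; it is a topological orientation if $\preceq$ is a closed subset of $S\times S$. For $P\subseteq S$: $P$ is left-bounded if some $s\in S$ has $s\preceq p$ for all $p\in P$, right-bounded if some $s$ has $p\preceq s$ for all $p\in P$. The meet of $P$ is an element $x$ with $x\preceq p$ for all $p\in P$ and $y\preceq x$ for every $y$ with $y\preceq p$ for all $p\in P$; the join is defined dually. $(S,\preceq)$ is a cc sponge if every nonempty right-bounded subset has a join. A function $h:S\to\mathbb{R}$ is a discriminator if for every $\varepsilon>0$ there is $\delta>0$ such that for all $x,y\in S$, $x\preceq y$ and $h(y)<h(x)+\delta$ imply $d(x,y)<\varepsilon$. *)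

theory Defs
  imports "HOL-Analysis.Analysis"
begin

definition orientation :: "('a \<Rightarrow> 'a \<Rightarrow> bool) \<Rightarrow> bool" where
  "orientation R \<longleftrightarrow> (\<forall>x. R x x) \<and> (\<forall>x y. R x y \<and> R y x \<longrightarrow> x = y)"

definition topological_orientation :: "('a::topological_space \<Rightarrow> 'a \<Rightarrow> bool) \<Rightarrow> bool" where
  "topological_orientation R \<longleftrightarrow> orientation R \<and> closed {(x, y). R x y}"

definition left_bounded :: "('a \<Rightarrow> 'a \<Rightarrow> bool) \<Rightarrow> 'a set \<Rightarrow> bool" where
  "left_bounded R P \<longleftrightarrow> (\<exists>s. \<forall>p\<in>P. R s p)"

definition right_bounded :: "('a \<Rightarrow> 'a \<Rightarrow> bool) \<Rightarrow> 'a set \<Rightarrow> bool" where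
  "right_bounded R P \<longleftrightarrow> (\<exists>s. \<forall>p\<in>P. R p s)"

definition is_meet :: "('a \<Rightarrow> 'a \<Rightarrow> bool) \<Rightarrow> 'a set \<Rightarrow> 'a \<Rightarrow> bool" where
  "is_meet R P x \<longleftrightarrow> (\<forall>p\<in>P. R x p) \<and> (\<forall>y. (\<forall>p\<in>P. R y p) \<longrightarrow> R y x)"

definition is_join :: "('a \<Rightarrow> 'a \<Rightarrow> bool) \<Rightarrow> 'a set \<Rightarrow> 'a \<Rightarrow> bool" where
  "is_join R P x \<longleftrightarrow> (\<forall>p\<in>P. R p x) \<and> (\<forall>y. (\<forall>p\<in>P. R p y) \<longrightarrow> R x y)"

definition cc_sponge :: "('a \<Rightarrow> 'a \<Rightarrow> bool) \<Rightarrow> bool" where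
  "cc_sponge R \<longleftrightarrow> (\<forall>P. P \<noteq> {} \<and> right_bounded R P \<longrightarrow> (\<exists>x. is_join R P x))"

definition discriminator :: "('a::metric_space \<Rightarrow> 'a \<Rightarrow> bool) \<Rightarrow> ('a \<Rightarrow> real) \<Rightarrow> bool" where
  "discriminator R h \<longleftrightarrow>
     (\<forall>\<epsilon>>0. \<exists>\<delta>>0. \<forall>x y. R x y \<and> h y < h x + \<delta> \<longrightarrow> dist x y < \<epsilon>)"

end

theory Submission
  imports Defs
begin

text \<open>
  The upper bounds of P form a closed set U, and the pairwise meets make U downward directed.
  Along a minimising sequence of h in U, any two terms have a common lower bound in U whose
  h-value is almost as small; the discriminator then places both terms close to it, so the
  sequence is Cauchy. Its limit m lies in U and minimises h there. For another upper bound y,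
  the meet z of m and y lies in U below m with h z \<ge> h m, so the discriminator forces z = m,
  i.e. m is below y: m is the join of P.
\<close>

definition rel_upper_bounds :: "('a \<Rightarrow> 'a \<Rightarrow> bool) \<Rightarrow> 'a set \<Rightarrow> 'a set" where
  "rel_upper_bounds R P = {u. \<forall>p\<in>P. R p u}"

definition downward_directed :: "('a \<Rightarrow> 'a \<Rightarrow> bool) \<Rightarrow> 'a set \<Rightarrow> bool" where
  "downward_directed R U \<longleftrightarrow> (\<forall>a\<in>U. \<forall>b\<in>U. \<exists>z\<in>U. R z a \<and> R z b)"

lemma discriminatorD:
  assumes "discriminator R h" "e > 0"
  obtains \<delta> where "\<delta> > 0" "\<And>x y. R x y \<Longrightarrow> h y < h x + \<delta> \<Longrightarrow> dist x y < e"
  using assms unfolding discriminator_def by blast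

lemma discriminator_eq:
  assumes "discriminator R h" "R x y" "h y \<le> h x"
  shows "x = y"
proof (rule ccontr)
  assume "x \<noteq> y"
  then obtain \<delta> where "\<delta> > 0" and \<delta>: "\<And>a b. R a b \<Longrightarrow> h b < h a + \<delta> \<Longrightarrow> dist a b < dist x y"
    using discriminatorD[OF assms(1), of "dist x y"] by auto
  have "dist x y < dist x y"
    using \<delta>[OF assms(2)] assms(3) \<open>\<delta> > 0\<close> by linarith
  then show False by simp
qed

lemma discriminator_mono:
  assumes "discriminator R h" "R x y"
  shows "h x \<le> h y"
  using discriminator_eq[OF assms] by force

lemma closed_rel_upper_bounds:
  assumes "closed {(x, y). R x y}"
  shows "closed (rel_upper_bounds R P)"
proof -
  have "rel_upper_bounds R P = (\<Inter>p\<in>P. Pair p -` {(x, y). R x y})"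
    unfolding rel_upper_bounds_def by auto
  also have "closed \<dots>"
    using assms by (intro closed_INT ballI continuous_closed_vimage continuous_intros)
  finally show ?thesis .
qed

lemma rel_upper_bounds_downward_directed:
  assumes "P \<noteq> {}" and meet: "\<And>a b. left_bounded R {a, b} \<Longrightarrow> \<exists>m. is_meet R {a, b} m"
  shows "downward_directed R (rel_upper_bounds R P)"
  unfolding downward_directed_def
proof (intro ballI)
  fix a b assume ab: "a \<in> rel_upper_bounds R P" "b \<in> rel_upper_bounds R P"
  then have "left_bounded R {a, b}"
    using \<open>P \<noteq> {}\<close> unfolding left_bounded_def rel_upper_bounds_def by auto
  then obtain z where "is_meet R {a, b} z" using meet by blast
  with ab show "\<exists>z\<in>rel_upper_bounds R P. R z a \<and> R z b"
    unfolding is_meet_def rel_upper_bounds_def by auto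
qed

lemma discriminator_minimizing_Cauchy:
  assumes "discriminator R h" "downward_directed R U"
    and "\<And>z. z \<in> U \<Longrightarrow> c \<le> h z" "\<And>n. u n \<in> U" "(\<lambda>n. h (u n)) \<longlonglongrightarrow> c"
  shows "Cauchy u"
proof (rule metric_CauchyI)
  fix e :: real assume "e > 0"
  then obtain \<delta> where "\<delta> > 0" and \<delta>: "\<And>x y. R x y \<Longrightarrow> h y < h x + \<delta> \<Longrightarrow> dist x y < e / 2"
    using discriminatorD[OF assms(1), of "e / 2"] by auto
  have "eventually (\<lambda>n. h (u n) < c + \<delta>) sequentially"
    using order_tendstoD(2)[OF assms(5)] \<open>\<delta> > 0\<close> by simp
  then obtain N where N: "\<And>n. n \<ge> N \<Longrightarrow> h (u n) < c + \<delta>"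
    unfolding eventually_sequentially by blast
  have "dist (u m) (u n) < e" if "m \<ge> N" "n \<ge> N" for m n
  proof -
    obtain z where z: "z \<in> U" "R z (u m)" "R z (u n)"
      using assms(2,4) unfolding downward_directed_def by blast
    have "dist z (u m) < e / 2" "dist z (u n) < e / 2"
      using \<delta>[OF z(2)] \<delta>[OF z(3)] N[OF that(1)] N[OF that(2)] assms(3)[OF z(1)] by auto
    then show ?thesis using dist_triangle2[of "u m" "u n" z] by (simp add: dist_commute)
  qed
  then show "\<exists>N. \<forall>m\<ge>N. \<forall>n\<ge>N. dist (u m) (u n) < e" by blast
qed

lemma discriminator_has_minimizer:
  fixes h :: "'a::complete_space \<Rightarrow> real"
  assumes "discriminator R h" "downward_directed R U"
    and "continuous_on U h" "closed U" "U \<noteq> {}" "bdd_below (h ` U)"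
  obtains m where "m \<in> U" "\<And>y. y \<in> U \<Longrightarrow> h m \<le> h y"
proof -
  define c where "c = Inf (h ` U)"
  have c_le: "c \<le> h y" if "y \<in> U" for y
    unfolding c_def using assms(6) that by (simp add: cInf_lower)
  have "c \<in> closure (h ` U)"
    unfolding c_def using assms(5,6) by (intro closure_contains_Inf) auto
  then obtain v where v: "\<And>n. v n \<in> h ` U" and "v \<longlonglongrightarrow> c"
    unfolding closure_sequential by blast
  moreover obtain u where u: "\<And>n. u n \<in> U" and "\<And>n. h (u n) = v n"
    using v unfolding image_iff by metis
  ultimately have hu: "(\<lambda>n. h (u n)) \<longlonglongrightarrow> c" by simp
  have "Cauchy u"
    using assms(1,2) c_le u hu by (rule discriminator_minimizing_Cauchy)
  then obtain m where m: "u \<longlonglongrightarrow> m" using convergent_eq_Cauchy by blast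
  have "m \<in> U" using closed_sequentially[OF assms(4) u m] .
  have "(\<lambda>n. h (u n)) \<longlonglongrightarrow> h m"
    using continuous_on_tendsto_compose[OF assms(3) m \<open>m \<in> U\<close>] u by simp
  then have "h m = c" using hu LIMSEQ_unique by blast
  then show thesis using that \<open>m \<in> U\<close> c_le by simp
qed

lemma discriminator_minimizer_least:
  assumes "discriminator R h" "downward_directed R U"
    and "m \<in> U" "\<And>y. y \<in> U \<Longrightarrow> h m \<le> h y" "y \<in> U"
  shows "R m y"
proof -
  obtain z where z: "z \<in> U" "R z m" "R z y"
    using assms(2,3,5) unfolding downward_directed_def by blast
  have "z = m" using discriminator_eq[OF assms(1) z(2) assms(4)[OF z(1)]] .
  with z(3) show ?thesis by simp
qed

theorem mainTheorem3:
  fixes R :: "'a::complete_space \<Rightarrow> 'a \<Rightarrow> bool"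
    and h :: "'a \<Rightarrow> real"
  assumes "topological_orientation R"
    and "\<And>a b. left_bounded R {a, b} \<Longrightarrow> \<exists>m. is_meet R {a, b} m"
    and "continuous_on UNIV h"
    and "discriminator R h"
  shows "cc_sponge R"
  unfolding cc_sponge_def
proof (intro allI impI)
  fix P assume P: "P \<noteq> {} \<and> right_bounded R P"
  let ?U = "rel_upper_bounds R P"
  obtain p where "p \<in> P" using P by blast
  have "?U \<noteq> {}" using P unfolding right_bounded_def rel_upper_bounds_def by auto
  have "bdd_below (h ` ?U)"
    using \<open>p \<in> P\<close> discriminator_mono[OF assms(4)]
    unfolding rel_upper_bounds_def bdd_below_def by blast
  have dir: "downward_directed R ?U"
    using P assms(2) by (intro rel_upper_bounds_downward_directed) auto
  have "closed ?U"
    using assms(1) unfolding topological_orientation_def by (intro closed_rel_upper_bounds) blast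
  obtain m where m: "m \<in> ?U" "\<And>y. y \<in> ?U \<Longrightarrow> h m \<le> h y"
    using discriminator_has_minimizer[OF assms(4) dir continuous_on_subset[OF assms(3)]]
      \<open>closed ?U\<close> \<open>?U \<noteq> {}\<close> \<open>bdd_below (h ` ?U)\<close> by blast
  have "R m y" if "y \<in> ?U" for y
    using discriminator_minimizer_least[OF assms(4) dir m that] .
  then show "\<exists>x. is_join R P x"
    using m(1) unfolding is_join_def rel_upper_bounds_def by blast
qed

end
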